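(* It is not possible in general to construct by origami a right triangle with given hypotenuse and leg. Precisely: $\sqrt{2+\sqrt2}\in\mathbb F_0$ and $1\in\mathbb F_0$, but $\sqrt{(\sqrt{2+\sqrt2})^2-1^2}=\sqrt{1+\sqrt2}\notin\mathbb F_0$. In particular $\mathbb F_0$ is not closed under $(h,a)\mapsto\sqrt{h^2-a^2}$ for $h>a>0$.
   Context: An origami pair is a pair $(\mathcal P,\mathcal L)$ where $\mathcal P\subset\mathbb R^2$ is a set of points and $\mathcal L$ is a collection of lines in $\mathbb R^2$ such that: (i) the intersection point of any two non-parallel lines of $\mathcal L$ lies in $\mathcal P$; (ii) for any two distinct points of $\mathcal P$, the line through them is in $\mathcal L$; (iii) for any two distinct points of $\mathcal P$, the perpendicular bisector of the segment joining them is in $\mathcal L$; (iv) if $L_1,L_2\in\mathcal L$, then every line equidistant from $L_1$ and $L_2$ is in $\mathcal L$ (the midline if they are parallel, the angle bisectors if they intersect); (v) if $L_1,L_2\in\mathcal L$, then the mirror reflection of $L_2$ across $L_1$ is in $\mathcal L$. A set $\mathcal P\subset\mathbb R^2$ is closed under origami constructions if there is a collection of lines $\mathcal L$ with $(\mathcal P,\mathcal L)$ an origami pair. The set of origami constructible points is $\mathcal P_0=\bigcap\{\mathcal P : (0,0),(0,1)\in\mathcal P \text{ and } \mathcal P \text{ is closed under origami constructions}\}$. The set of origami numbers is $\mathbb F_0=\{\alpha\in\mathbb R : \exists v_1,v_2\in\mathcal P_0,\ |\alpha|=\operatorname{dist}(v_1,v_2)\}$. *)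

theory Defs
  imports "HOL-Analysis.Analysis"
begin

type_synonym point = "real \<times> real"

definition line_eq :: "real \<Rightarrow> real \<Rightarrow> real \<Rightarrow> point set" where
  "line_eq a b c = {p. a * fst p + b * snd p = c}"

definition is_line :: "point set \<Rightarrow> bool" where
  "is_line L \<longleftrightarrow> (\<exists>a b c. (a, b) \<noteq> (0, 0) \<and> L = line_eq a b c)"

definition line_through :: "point \<Rightarrow> point \<Rightarrow> point set" where
  "line_through p q = {x. \<exists>t::real. x = (fst p + t * (fst q - fst p), snd p + t * (snd q - snd p))}"

definition perp_bisector :: "point \<Rightarrow> point \<Rightarrow> point set" where
  "perp_bisector p q = {x. dist x p = dist x q}"

definition reflect_pt :: "point set \<Rightarrow> point \<Rightarrow> point" where
  "reflect_pt L p = (let (a, b, c) = (SOME (a, b, c). (a, b) \<noteq> (0, 0) \<and> L = line_eq a b c);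
                         k = 2 * (a * fst p + b * snd p - c) / (a\<^sup>2 + b\<^sup>2)
                     in (fst p - k * a, snd p - k * b))"

definition reflect_line :: "point set \<Rightarrow> point set \<Rightarrow> point set" where
  "reflect_line L1 L2 = reflect_pt L1 ` L2"

text \<open>L is a line equidistant from the two distinct lines L1 and L2 (the midline if they are
  parallel, one of the two angle bisectors if they intersect).\<close>
definition equidistant_line :: "point set \<Rightarrow> point set \<Rightarrow> point set \<Rightarrow> bool" where
  "equidistant_line L L1 L2 \<longleftrightarrow> is_line L \<and> (\<forall>x\<in>L. infdist x L1 = infdist x L2)"

definition origami_pair :: "point set \<Rightarrow> point set set \<Rightarrow> bool" where
  "origami_pair P \<L> \<longleftrightarrow>
     (\<forall>L\<in>\<L>. is_line L) \<and>
     (\<forall>L1\<in>\<L>. \<forall>L2\<in>\<L>. \<forall>p. L1 \<inter> L2 = {p} \<longrightarrow> p \<in> P) \<and>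
     (\<forall>p\<in>P. \<forall>q\<in>P. p \<noteq> q \<longrightarrow> line_through p q \<in> \<L>) \<and>
     (\<forall>p\<in>P. \<forall>q\<in>P. p \<noteq> q \<longrightarrow> perp_bisector p q \<in> \<L>) \<and>
     (\<forall>L1\<in>\<L>. \<forall>L2\<in>\<L>. \<forall>L. L1 \<noteq> L2 \<longrightarrow> equidistant_line L L1 L2 \<longrightarrow> L \<in> \<L>) \<and>
     (\<forall>L1\<in>\<L>. \<forall>L2\<in>\<L>. reflect_line L1 L2 \<in> \<L>)"

definition origami_closed :: "point set \<Rightarrow> bool" where
  "origami_closed P \<longleftrightarrow> (\<exists>\<L>. origami_pair P \<L>)"

definition P0 :: "point set" where
  "P0 = \<Inter>{P. (0, 0) \<in> P \<and> (0, 1) \<in> P \<and> origami_closed P}"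

definition F0 :: "real set" where
  "F0 = {\<alpha>. \<exists>v1\<in>P0. \<exists>v2\<in>P0. \<bar>\<alpha>\<bar> = dist v1 v2}"

end

theory Submission
  imports Defs
begin

text \<open>The point \<open>(sqrt 2 / 2, 1 + sqrt 2 / 2)\<close>, at distance \<open>sqrt (2 + sqrt 2)\<close> from the origin,
  is reached by a short explicit sequence of folds.

  For the negative part, call a subfield \<open>K\<close> of \<real> Pythagorean if it is closed under
  \<open>(a, b) \<mapsto> sqrt (a\<^sup>2 + b\<^sup>2)\<close>. Then \<open>K \<times> K\<close> is closed under origami constructions, witnessed by
  the lines with an equation over \<open>K\<close>: intersections, joins, perpendicular bisectors and
  reflections are rational in the coefficients, and angle bisectors only need the normalising
  factors \<open>sqrt (a\<^sup>2 + b\<^sup>2)\<close>. Hence \<open>F0 \<subseteq> K\<close>. A Pythagorean subfield without \<open>sqrt (1 + sqrt 2)\<close>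
  is the domain of a maximal (Zorn) extension \<open>\<sigma>\<close> of the conjugation \<open>sqrt 2 \<mapsto> - sqrt 2\<close>:
  if \<open>sqrt (a\<^sup>2 + b\<^sup>2)\<close> were missing, it could be adjoined and sent to \<open>sqrt (\<sigma>(a)\<^sup>2 + \<sigma>(b)\<^sup>2)\<close>,
  while \<open>sqrt (1 + sqrt 2)\<close> would need an image squaring to \<open>\<sigma>(1 + sqrt 2) = 1 - sqrt 2 < 0\<close>.\<close>

section \<open>Pythagorean subfields of the reals\<close>

lemma sqrt_2_not_rat: "sqrt 2 \<notin> \<rat>"
proof
  assume "sqrt 2 \<in> \<rat>"
  then obtain m n :: nat
    where n: "n \<noteq> 0" and sq: "\<bar>sqrt 2\<bar> = m / n" and cop: "coprime m n"
    by (rule Rats_abs_nat_div_natE)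
  have "real m = sqrt 2 * n" using n sq by (simp add: field_simps)
  then have "real (m\<^sup>2) = real (2 * n\<^sup>2)" by (simp add: power_mult_distrib)
  then have eq: "m\<^sup>2 = 2 * n\<^sup>2" by (metis of_nat_eq_iff)
  then have "2 dvd m" by (metis dvd_triv_left prime_dvd_power two_is_prime_nat)
  then obtain k where "m = 2 * k" ..
  with eq have "n\<^sup>2 = 2 * k\<^sup>2" by (simp add: power2_eq_square)
  then have "2 dvd n" by (metis dvd_triv_left prime_dvd_power two_is_prime_nat)
  with \<open>2 dvd m\<close> cop show False
    by (metis coprime_common_divisor_nat one_neq_zero numeral_eq_one_iff semiring_norm(85))
qed

locale pythagorean_subfield =
  fixes K :: "real set"
  assumes zero_mem: "0 \<in> K" and one_mem: "1 \<in> K"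
    and add_mem: "a \<in> K \<Longrightarrow> b \<in> K \<Longrightarrow> a + b \<in> K"
    and mult_mem: "a \<in> K \<Longrightarrow> b \<in> K \<Longrightarrow> a * b \<in> K"
    and uminus_mem: "a \<in> K \<Longrightarrow> - a \<in> K"
    and inverse_mem: "a \<in> K \<Longrightarrow> inverse a \<in> K"
    and hypot_mem: "a \<in> K \<Longrightarrow> b \<in> K \<Longrightarrow> sqrt (a\<^sup>2 + b\<^sup>2) \<in> K"
begin

lemma diff_mem: "a \<in> K \<Longrightarrow> b \<in> K \<Longrightarrow> a - b \<in> K"
  using add_mem[of a "- b"] uminus_mem by simp

lemma divide_mem: "a \<in> K \<Longrightarrow> b \<in> K \<Longrightarrow> a / b \<in> K"
  using mult_mem[of a "inverse b"] inverse_mem by (simp add: divide_inverse)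

lemma two_mem: "2 \<in> K"
  using add_mem[OF one_mem one_mem] by simp

lemma power2_mem: "a \<in> K \<Longrightarrow> a\<^sup>2 \<in> K"
  using mult_mem by (simp add: power2_eq_square)

lemmas closure_rules = zero_mem one_mem two_mem add_mem mult_mem uminus_mem inverse_mem
  hypot_mem diff_mem divide_mem power2_mem

end

text \<open>Field homomorphisms from subfields of \<real> into \<real>, as graphs: the union of a chain of
  them is again one, which is what Zorn's lemma needs.\<close>

locale field_hom_graph =
  fixes G :: "(real \<times> real) set"
  assumes single_valued: "(x, u) \<in> G \<Longrightarrow> (x, v) \<in> G \<Longrightarrow> u = v"
    and zero_mem: "(0, 0) \<in> G" and one_mem: "(1, 1) \<in> G"
    and add_mem: "(x, u) \<in> G \<Longrightarrow> (y, v) \<in> G \<Longrightarrow> (x + y, u + v) \<in> G"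
    and mult_mem: "(x, u) \<in> G \<Longrightarrow> (y, v) \<in> G \<Longrightarrow> (x * y, u * v) \<in> G"
    and uminus_mem: "(x, u) \<in> G \<Longrightarrow> (- x, - u) \<in> G"
    and inverse_mem: "(x, u) \<in> G \<Longrightarrow> (inverse x, inverse u) \<in> G"
begin

lemma diff_mem: "(x, u) \<in> G \<Longrightarrow> (y, v) \<in> G \<Longrightarrow> (x - y, u - v) \<in> G"
  using add_mem[of x u "- y" "- v"] uminus_mem by simp

lemma divide_mem: "(x, u) \<in> G \<Longrightarrow> (y, v) \<in> G \<Longrightarrow> (x / y, u / v) \<in> G"
  using mult_mem[of x u "inverse y" "inverse v"] inverse_mem by (simp add: divide_inverse)

lemma image_nonzero:
  assumes "(x, u) \<in> G" "x \<noteq> 0"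
  shows "u \<noteq> 0"
proof
  assume "u = 0"
  have "(x * inverse x, u * inverse u) \<in> G" using assms(1) mult_mem inverse_mem by blast
  with \<open>u = 0\<close> \<open>x \<noteq> 0\<close> have "(1, 0) \<in> G" by simp
  then show False using single_valued[OF _ one_mem] by fastforce
qed

lemma image_square_nonneg:
  assumes "s \<in> Domain G" "(s * s, u) \<in> G"
  shows "0 \<le> u"
proof -
  obtain v where "(s, v) \<in> G" using assms(1) by blast
  then have "(s * s, v * v) \<in> G" using mult_mem by blast
  then show ?thesis using single_valued[OF assms(2)] by simp
qed

end

lemma field_hom_graph_Id_on_Rats: "field_hom_graph (Id_on \<rat>)"
  by unfold_locales (auto intro: Rats_add Rats_mult Rats_minus_iff Rats_inverse)

definition adjoin_sqrt :: "(real \<times> real) set \<Rightarrow> real \<Rightarrow> real \<Rightarrow> (real \<times> real) set" where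
  "adjoin_sqrt G d e = {(x + y * d, u + v * e) | x u y v. (x, u) \<in> G \<and> (y, v) \<in> G}"

locale sqrt_adjunction = field_hom_graph +
  fixes d e :: real
  assumes not_in_Domain: "d \<notin> Domain G"
    and square_mem: "(d * d, e * e) \<in> G"
begin

lemma adjoin_sqrt_memI: "(x, u) \<in> G \<Longrightarrow> (y, v) \<in> G \<Longrightarrow> (x + y * d, u + v * e) \<in> adjoin_sqrt G d e"
  unfolding adjoin_sqrt_def by blast

lemma adjoin_sqrt_memE:
  assumes "(a, p) \<in> adjoin_sqrt G d e"
  obtains x u y v where "(x, u) \<in> G" "(y, v) \<in> G" "a = x + y * d" "p = u + v * e"
  using assms unfolding adjoin_sqrt_def by blast

lemma subset_adjoin_sqrt: "G \<subseteq> adjoin_sqrt G d e"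
  using adjoin_sqrt_memI[OF _ zero_mem] by auto

lemma adjoin_sqrt_gen_mem: "(d, e) \<in> adjoin_sqrt G d e"
  using adjoin_sqrt_memI[OF zero_mem one_mem] by simp

lemma coordinates_unique:
  assumes "(x, u) \<in> G" "(y, v) \<in> G" "(x', u') \<in> G" "(y', v') \<in> G"
    and "x + y * d = x' + y' * d"
  shows "y = y'" "x = x'"
proof -
  show "y = y'"
  proof (rule ccontr)
    assume "y \<noteq> y'"
    then have "d = (x - x') / (y' - y)" using assms(5) by (simp add: field_simps)
    moreover have "((x - x') / (y' - y), (u - u') / (v' - v)) \<in> G"
      using assms(1-4) diff_mem divide_mem by blast
    ultimately show False using not_in_Domain by blast
  qed
  then show "x = x'" using assms(5) by simp
qed

lemma norm_form_nonzero:
  assumes "(x, u) \<in> G" "(y, v) \<in> G" "x \<noteq> 0 \<or> y \<noteq> 0"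
  shows "x * x - y * y * (d * d) \<noteq> 0"
proof
  assume N: "x * x - y * y * (d * d) = 0"
  show False
  proof (cases "y = 0")
    case True
    then show False using N assms(3) by simp
  next
    case False
    then have "(x / y)\<^sup>2 = d\<^sup>2" using N by (simp add: field_simps power2_eq_square)
    then have "d = x / y \<or> d = - (x / y)" by (metis power2_eq_iff)
    moreover have "(x / y, u / v) \<in> G" "(- (x / y), - (u / v)) \<in> G"
      using assms(1,2) divide_mem uminus_mem by blast+
    ultimately show False using not_in_Domain by blast
  qed
qed

lemma adjoin_sqrt_add_mult:
  assumes "(a, p) \<in> adjoin_sqrt G d e" "(b, q) \<in> adjoin_sqrt G d e"
  shows "(a + b, p + q) \<in> adjoin_sqrt G d e" "(a * b, p * q) \<in> adjoin_sqrt G d e"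
proof -
  obtain x1 u1 y1 v1 where 1: "(x1, u1) \<in> G" "(y1, v1) \<in> G" "a = x1 + y1 * d" "p = u1 + v1 * e"
    using assms(1) by (rule adjoin_sqrt_memE)
  obtain x2 u2 y2 v2 where 2: "(x2, u2) \<in> G" "(y2, v2) \<in> G" "b = x2 + y2 * d" "q = u2 + v2 * e"
    using assms(2) by (rule adjoin_sqrt_memE)
  have "(x1 + x2 + (y1 + y2) * d, u1 + u2 + (v1 + v2) * e) \<in> adjoin_sqrt G d e"
    using 1 2 by (intro adjoin_sqrt_memI add_mem)
  then show "(a + b, p + q) \<in> adjoin_sqrt G d e"
    using 1 2 by (simp add: algebra_simps)
  have "(x1 * x2 + y1 * y2 * (d * d) + (x1 * y2 + y1 * x2) * d,
         u1 * u2 + v1 * v2 * (e * e) + (u1 * v2 + v1 * u2) * e) \<in> adjoin_sqrt G d e"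
    using adjoin_sqrt_memI[OF add_mem[OF mult_mem[OF 1(1) 2(1)] mult_mem[OF mult_mem[OF 1(2) 2(2)] square_mem]]
        add_mem[OF mult_mem[OF 1(1) 2(2)] mult_mem[OF 1(2) 2(1)]]] .
  then show "(a * b, p * q) \<in> adjoin_sqrt G d e"
    using 1 2 by (simp add: algebra_simps)
qed

lemma adjoin_sqrt_uminus:
  assumes "(a, p) \<in> adjoin_sqrt G d e"
  shows "(- a, - p) \<in> adjoin_sqrt G d e"
proof -
  obtain x u y v where h: "(x, u) \<in> G" "(y, v) \<in> G" "a = x + y * d" "p = u + v * e"
    using assms by (rule adjoin_sqrt_memE)
  have "(- x + (- y) * d, - u + (- v) * e) \<in> adjoin_sqrt G d e"
    using h by (intro adjoin_sqrt_memI uminus_mem)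
  then show ?thesis using h by simp
qed

text \<open>The inverse is computed with the conjugate: \<open>1 / (x + y d) = (x - y d) / (x\<^sup>2 - y\<^sup>2 d\<^sup>2)\<close>.\<close>

lemma adjoin_sqrt_inverse:
  assumes "(a, p) \<in> adjoin_sqrt G d e"
  shows "(inverse a, inverse p) \<in> adjoin_sqrt G d e"
proof -
  obtain x u y v where h: "(x, u) \<in> G" "(y, v) \<in> G" "a = x + y * d" "p = u + v * e"
    using assms by (rule adjoin_sqrt_memE)
  show ?thesis
  proof (cases "x = 0 \<and> y = 0")
    case True
    then have "u = 0" "v = 0" using h(1,2) single_valued zero_mem by blast+
    then show ?thesis using True h subset_adjoin_sqrt zero_mem by auto
  next
    case False
    define N where "N = x * x - y * y * (d * d)"
    define M where "M = u * u - v * v * (e * e)"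
    have NM: "(N, M) \<in> G" unfolding N_def M_def
      using diff_mem[OF mult_mem[OF h(1) h(1)] mult_mem[OF mult_mem[OF h(2) h(2)] square_mem]] .
    have "N \<noteq> 0" unfolding N_def using norm_form_nonzero h(1,2) False by blast
    have "M \<noteq> 0" using image_nonzero[OF NM \<open>N \<noteq> 0\<close>] .
    have "a * ((x - y * d) / N) = 1"
      using \<open>N \<noteq> 0\<close> unfolding N_def h(3) by (simp add: algebra_simps)
    then have "inverse a = x / N + (- y / N) * d"
      by (simp add: inverse_unique diff_divide_distrib)
    moreover have "p * ((u - v * e) / M) = 1"
      using \<open>M \<noteq> 0\<close> unfolding M_def h(4) by (simp add: algebra_simps)
    then have "inverse p = u / M + (- v / M) * e"
      by (simp add: inverse_unique diff_divide_distrib)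
    moreover have "(x / N + (- y / N) * d, u / M + (- v / M) * e) \<in> adjoin_sqrt G d e"
      using adjoin_sqrt_memI[OF divide_mem[OF h(1) NM] uminus_mem[OF divide_mem[OF h(2) NM]]]
      by simp
    ultimately show ?thesis by simp
  qed
qed

lemma field_hom_graph_adjoin_sqrt: "field_hom_graph (adjoin_sqrt G d e)"
proof
  fix a p q assume "(a, p) \<in> adjoin_sqrt G d e" "(a, q) \<in> adjoin_sqrt G d e"
  then obtain x1 u1 y1 v1 x2 u2 y2 v2 where
    h: "(x1, u1) \<in> G" "(y1, v1) \<in> G" "(x2, u2) \<in> G" "(y2, v2) \<in> G"
      "a = x1 + y1 * d" "p = u1 + v1 * e" "a = x2 + y2 * d" "q = u2 + v2 * e"
    by (elim adjoin_sqrt_memE)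
  have "y1 = y2" "x1 = x2" using coordinates_unique[OF h(1-4)] h(5,7) by simp_all
  then show "p = q" using h single_valued by metis
next
  show "(0, 0) \<in> adjoin_sqrt G d e" "(1, 1) \<in> adjoin_sqrt G d e"
    using subset_adjoin_sqrt zero_mem one_mem by blast+
qed (fact adjoin_sqrt_add_mult adjoin_sqrt_uminus adjoin_sqrt_inverse)+

end

lemma field_hom_graph_Union_chain:
  assumes "C \<noteq> {}" "\<And>G. G \<in> C \<Longrightarrow> field_hom_graph G" "chain\<^sub>\<subseteq> C"
  shows "field_hom_graph (\<Union>C)"
proof -
  have common: "\<exists>G\<in>C. p \<in> G \<and> q \<in> G" if "p \<in> \<Union>C" "q \<in> \<Union>C" for p q
    using that assms(3) unfolding chain_subset_def by blast
  obtain G0 where "G0 \<in> C" using assms(1) by blast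
  show ?thesis
  proof
    show "(0, 0) \<in> \<Union>C" "(1, 1) \<in> \<Union>C"
      using \<open>G0 \<in> C\<close> assms(2) field_hom_graph.zero_mem field_hom_graph.one_mem by blast+
  next
    fix x u v assume "(x, u) \<in> \<Union>C" "(x, v) \<in> \<Union>C"
    then show "u = v" using common assms(2) field_hom_graph.single_valued by metis
  next
    fix x u y v assume "(x, u) \<in> \<Union>C" "(y, v) \<in> \<Union>C"
    then obtain G where "G \<in> C" "(x, u) \<in> G" "(y, v) \<in> G" using common by blast
    then show "(x + y, u + v) \<in> \<Union>C" "(x * y, u * v) \<in> \<Union>C"
      using assms(2) field_hom_graph.add_mem field_hom_graph.mult_mem by blast+
  next
    fix x u assume "(x, u) \<in> \<Union>C"
    then show "(- x, - u) \<in> \<Union>C" "(inverse x, inverse u) \<in> \<Union>C"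
      using assms(2) field_hom_graph.uminus_mem field_hom_graph.inverse_mem by blast+
  qed
qed

lemma exists_maximal_field_hom_graph:
  assumes "field_hom_graph G0"
  obtains M where "G0 \<subseteq> M" "field_hom_graph M"
    "\<And>X. field_hom_graph X \<Longrightarrow> M \<subseteq> X \<Longrightarrow> X = M"
proof -
  let ?S = "{G. field_hom_graph G \<and> G0 \<subseteq> G}"
  have "\<forall>C\<in>chains ?S. \<exists>U\<in>?S. \<forall>X\<in>C. X \<subseteq> U"
  proof
    fix C assume "C \<in> chains ?S"
    then have C: "C \<subseteq> ?S" "chain\<^sub>\<subseteq> C" unfolding chains_def by auto
    show "\<exists>U\<in>?S. \<forall>X\<in>C. X \<subseteq> U"
    proof (cases "C = {}")
      case True
      then show ?thesis using assms by (intro bexI[of _ G0]) auto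
    next
      case False
      have "field_hom_graph (\<Union>C)" using field_hom_graph_Union_chain[OF False _ C(2)] C(1) by blast
      moreover have "G0 \<subseteq> \<Union>C" using False C(1) by blast
      ultimately show ?thesis by (intro bexI[of _ "\<Union>C"]) auto
    qed
  qed
  then obtain M where M: "M \<in> ?S" "\<forall>X\<in>?S. M \<subseteq> X \<longrightarrow> X = M"
    by (blast dest: Zorn_Lemma2)
  have "X = M" if "field_hom_graph X" "M \<subseteq> X" for X using M that by blast
  with M show ?thesis using that by blast
qed

lemma (in field_hom_graph) maximal_imp_pythagorean_subfield:
  assumes maximal: "\<And>X. field_hom_graph X \<Longrightarrow> G \<subseteq> X \<Longrightarrow> X = G"
  shows "pythagorean_subfield (Domain G)"
proof
  fix a b assume "a \<in> Domain G" "b \<in> Domain G"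
  then obtain u v where uv: "(a, u) \<in> G" "(b, v) \<in> G" by blast
  then show "a + b \<in> Domain G" "a * b \<in> Domain G" "- a \<in> Domain G" "inverse a \<in> Domain G"
    using add_mem mult_mem uminus_mem inverse_mem by blast+
  show "sqrt (a\<^sup>2 + b\<^sup>2) \<in> Domain G"
  proof (rule ccontr)
    let ?d = "sqrt (a\<^sup>2 + b\<^sup>2)" and ?e = "sqrt (u\<^sup>2 + v\<^sup>2)"
    assume "?d \<notin> Domain G"
    moreover have "(?d * ?d, ?e * ?e) \<in> G"
      using add_mem[OF mult_mem[OF uv(1) uv(1)] mult_mem[OF uv(2) uv(2)]]
      by (simp add: power2_eq_square)
    ultimately interpret sqrt_adjunction G ?d ?e by unfold_locales
    have "adjoin_sqrt G ?d ?e = G"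
      using maximal field_hom_graph_adjoin_sqrt subset_adjoin_sqrt by blast
    then show False using adjoin_sqrt_gen_mem \<open>?d \<notin> Domain G\<close> by blast
  qed
qed (use zero_mem one_mem in blast)+

lemma exists_pythagorean_subfield_not_mem: "\<exists>K. pythagorean_subfield K \<and> sqrt (1 + sqrt 2) \<notin> K"
proof -
  interpret sqrt_adjunction "Id_on \<rat>" "sqrt 2" "- sqrt 2"
    by (intro sqrt_adjunction.intro field_hom_graph_Id_on_Rats sqrt_adjunction_axioms.intro)
      (auto simp: sqrt_2_not_rat)
  obtain M where M: "adjoin_sqrt (Id_on \<rat>) (sqrt 2) (- sqrt 2) \<subseteq> M" "field_hom_graph M"
    "\<And>X. field_hom_graph X \<Longrightarrow> M \<subseteq> X \<Longrightarrow> X = M"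
    using exists_maximal_field_hom_graph[OF field_hom_graph_adjoin_sqrt] by blast
  interpret M: field_hom_graph M by (rule M(2))
  have "(1 + sqrt 2, 1 + - sqrt 2) \<in> M"
    using M(1) adjoin_sqrt_gen_mem M.add_mem[OF M.one_mem] by blast
  moreover have "sqrt (1 + sqrt 2) * sqrt (1 + sqrt 2) = 1 + sqrt 2" by simp
  moreover have "1 + - sqrt 2 < (0::real)" by simp
  ultimately have "sqrt (1 + sqrt 2) \<notin> Domain M"
    using M.image_square_nonneg by fastforce
  then show ?thesis using M.maximal_imp_pythagorean_subfield M(3) by blast
qed

section \<open>Lines given by equations\<close>

lemma mem_line_eq [simp]: "p \<in> line_eq a b c \<longleftrightarrow> a * fst p + b * snd p = c"
  unfolding line_eq_def by simp

lemma is_line_line_eq: "(a, b) \<noteq> (0, 0) \<Longrightarrow> is_line (line_eq a b c)"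
  unfolding is_line_def by blast

lemma line_eq_scale:
  assumes "l \<noteq> 0"
  shows "line_eq (l * a) (l * b) (l * c) = line_eq a b c"
proof -
  have "l * a * x + l * b * y = l * c \<longleftrightarrow> a * x + b * y = c" for x y
    using assms by (metis distrib_left mult.assoc mult_left_cancel)
  then show ?thesis unfolding line_eq_def by auto
qed

lemma sum_squares_pos: "(a, b) \<noteq> (0::real, 0) \<Longrightarrow> 0 < a\<^sup>2 + b\<^sup>2"
  by (simp add: sum_power2_gt_zero_iff)

lemma line_eq_point_mem:
  assumes "(a, b) \<noteq> (0, 0)"
  shows "(c * a / (a\<^sup>2 + b\<^sup>2), c * b / (a\<^sup>2 + b\<^sup>2)) \<in> line_eq a b c"
proof -
  have "a * (c * a / (a\<^sup>2 + b\<^sup>2)) + b * (c * b / (a\<^sup>2 + b\<^sup>2)) = c * (a\<^sup>2 + b\<^sup>2) / (a\<^sup>2 + b\<^sup>2)"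
    by (simp add: power2_eq_square add_divide_distrib algebra_simps)
  then show ?thesis using assms by auto
qed

lemma line_eq_subset_imp_proportional:
  assumes ab: "(a, b) \<noteq> (0, 0)" and ab': "(a', b') \<noteq> (0, 0)"
    and sub: "line_eq a b c \<subseteq> line_eq a' b' c'"
  obtains l where "l \<noteq> 0" "a' = l * a" "b' = l * b" "c' = l * c"
proof -
  define n where "n = a\<^sup>2 + b\<^sup>2"
  have n: "n > 0" unfolding n_def using sum_squares_pos[OF ab] .
  define p where "p = (c * a / n, c * b / n)"
  have p: "p \<in> line_eq a b c" unfolding p_def n_def using line_eq_point_mem[OF ab] .
  have q: "(fst p - b, snd p + a) \<in> line_eq a b c" using p by (simp add: algebra_simps)
  have e1: "a' * fst p + b' * snd p = c'" using subsetD[OF sub p] by simp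
  have e2: "a' * (fst p - b) + b' * (snd p + a) = c'" using subsetD[OF sub q] by simp
  have cross: "b' * a = a' * b" using e1 e2 by (simp add: algebra_simps)
  define l where "l = (a * a' + b * b') / n"
  have "l * a * n = (a * a' + b * b') * a" "l * b * n = (a * a' + b * b') * b"
    unfolding l_def using n by simp_all
  moreover have "(a * a' + b * b') * a = a' * n" "(a * a' + b * b') * b = b' * n"
    unfolding n_def using cross by algebra+
  ultimately have a': "a' = l * a" and b': "b' = l * b" using n by simp_all
  have "c' = l * (a * fst p + b * snd p)" using e1 unfolding a' b' by (simp add: algebra_simps)
  then have "c' = l * c" using p by simp
  moreover have "l \<noteq> 0" using ab' a' b' by auto
  ultimately show ?thesis using that a' b' by blast
qed

lemma line_eq_subset_imp_eq:
  assumes "(a, b) \<noteq> (0, 0)" "(a', b') \<noteq> (0, 0)" "line_eq a b c \<subseteq> line_eq a' b' c'"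
  shows "line_eq a' b' c' = line_eq a b c"
  using line_eq_subset_imp_proportional[OF assms] line_eq_scale by metis

text \<open>A line is closed under midpoints, on which affine functions are additive; so if it
  meets the complements of both lines at \<open>u\<close> and \<open>v\<close>, the midpoint of \<open>u\<close> and \<open>v\<close> lies
  on neither.\<close>

lemma line_eq_subset_UnD:
  assumes "line_eq a b c \<subseteq> line_eq a1 b1 c1 \<union> line_eq a2 b2 c2"
  shows "line_eq a b c \<subseteq> line_eq a1 b1 c1 \<or> line_eq a b c \<subseteq> line_eq a2 b2 c2"
proof (rule ccontr)
  assume "\<not> ?thesis"
  then obtain u v where u: "u \<in> line_eq a b c" "u \<notin> line_eq a1 b1 c1"
    and v: "v \<in> line_eq a b c" "v \<notin> line_eq a2 b2 c2" by blast
  with assms have "u \<in> line_eq a2 b2 c2" "v \<in> line_eq a1 b1 c1" by blast+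
  define m where "m = ((fst u + fst v) / 2, (snd u + snd v) / 2)"
  have "m \<in> line_eq a b c" using u(1) v(1) unfolding m_def by (simp add: field_simps)
  moreover have "m \<notin> line_eq a1 b1 c1" "m \<notin> line_eq a2 b2 c2"
    using u v \<open>u \<in> line_eq a2 b2 c2\<close> \<open>v \<in> line_eq a1 b1 c1\<close>
    unfolding m_def by (simp_all add: field_simps)
  ultimately show False using assms by blast
qed

lemma line_through_eq_line_eq:
  assumes "p \<noteq> q"
  shows "line_through p q = line_eq (snd q - snd p) (fst p - fst q)
           ((snd q - snd p) * fst p + (fst p - fst q) * snd p)"
proof (intro equalityI subsetI)
  fix x assume "x \<in> line_through p q"
  then show "x \<in> line_eq (snd q - snd p) (fst p - fst q) ((snd q - snd p) * fst p + (fst p - fst q) * snd p)"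
    unfolding line_through_def by (auto simp: algebra_simps)
next
  fix x assume "x \<in> line_eq (snd q - snd p) (fst p - fst q) ((snd q - snd p) * fst p + (fst p - fst q) * snd p)"
  then have E: "(snd q - snd p) * (fst x - fst p) = (fst q - fst p) * (snd x - snd p)"
    by (simp add: algebra_simps)
  show "x \<in> line_through p q"
  proof (cases "fst q = fst p")
    case False
    define t where "t = (fst x - fst p) / (fst q - fst p)"
    have "fst x = fst p + t * (fst q - fst p)" "snd x = snd p + t * (snd q - snd p)"
      using False E unfolding t_def by (simp_all add: field_simps)
    then show ?thesis unfolding line_through_def by (auto simp: prod_eq_iff)
  next
    case True
    then have "snd q \<noteq> snd p" using assms by (simp add: prod_eq_iff)
    moreover have "(snd q - snd p) * (fst x - fst p) = 0" using E True by simp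
    ultimately have "fst x = fst p" by simp
    define t where "t = (snd x - snd p) / (snd q - snd p)"
    have "fst x = fst p + t * (fst q - fst p)" "snd x = snd p + t * (snd q - snd p)"
      using True \<open>fst x = fst p\<close> \<open>snd q \<noteq> snd p\<close> unfolding t_def by simp_all
    then show ?thesis unfolding line_through_def by (auto simp: prod_eq_iff)
  qed
qed

lemma dist_point: "dist (x :: point) y = sqrt ((fst x - fst y)\<^sup>2 + (snd x - snd y)\<^sup>2)"
  by (cases x; cases y) (simp add: dist_Pair_Pair dist_real_def)

lemma perp_bisector_eq_line_eq:
  "perp_bisector p q = line_eq (2 * (fst q - fst p)) (2 * (snd q - snd p))
     ((fst q)\<^sup>2 + (snd q)\<^sup>2 - (fst p)\<^sup>2 - (snd p)\<^sup>2)"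
  unfolding perp_bisector_def line_eq_def dist_point
  by (auto simp: power2_eq_square algebra_simps)

lemma infdist_line_eq:
  assumes ab: "(a, b) \<noteq> (0, 0)"
  shows "infdist x (line_eq a b c) = \<bar>a * fst x + b * snd x - c\<bar> / sqrt (a\<^sup>2 + b\<^sup>2)"
proof -
  define n where "n = a\<^sup>2 + b\<^sup>2"
  have n: "n > 0" unfolding n_def using sum_squares_pos[OF ab] .
  define h where "h = \<bar>a * fst x + b * snd x - c\<bar> / sqrt n"
  define k where "k = (a * fst x + b * snd x - c) / n"
  define y where "y = (fst x - k * a, snd x - k * b)"
  have "k * n = a * fst x + b * snd x - c" unfolding k_def using n by simp
  moreover have "a * (fst x - k * a) + b * (snd x - k * b) = a * fst x + b * snd x - k * n"
    unfolding n_def by (simp add: algebra_simps power2_eq_square)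
  ultimately have y: "y \<in> line_eq a b c" unfolding y_def by simp
  have "dist x y = sqrt (k\<^sup>2 * n)"
    unfolding dist_point y_def n_def by (simp add: power2_eq_square algebra_simps)
  also have "\<dots> = \<bar>k\<bar> * sqrt n" by (simp add: real_sqrt_mult)
  also have "\<dots> = h" unfolding h_def k_def using n by (simp add: abs_div field_simps)
  finally have "dist x y = h" .
  then have "infdist x (line_eq a b c) \<le> h" using infdist_le[OF y, of x] by simp
  moreover have "line_eq a b c \<noteq> {}" using y by blast
  then have "h \<le> infdist x (line_eq a b c)"
    unfolding infdist_notempty[OF \<open>line_eq a b c \<noteq> {}\<close>]
  proof (rule cINF_greatest)
    fix z assume "z \<in> line_eq a b c"
    then have "a * fst x + b * snd x - c = (a, b) \<bullet> (fst x - fst z, snd x - snd z)"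
      by (simp add: algebra_simps)
    then have "\<bar>a * fst x + b * snd x - c\<bar> \<le> sqrt n * dist x z"
      using Cauchy_Schwarz_ineq2[of "(a, b)" "(fst x - fst z, snd x - snd z)"]
      unfolding dist_point n_def by (simp add: norm_Pair)
    then show "h \<le> dist x z" unfolding h_def using n by (simp add: divide_le_eq mult.commute)
  qed
  ultimately show ?thesis unfolding h_def n_def by simp
qed

lemma cramer_rule:
  fixes a b c a' b' c' x y :: real
  assumes "a * x + b * y = c" "a' * x + b' * y = c'"
  shows "(a * b' - a' * b) * x = c * b' - c' * b" "(a * b' - a' * b) * y = a * c' - a' * c"
proof -
  show "(a * b' - a' * b) * x = c * b' - c' * b"
    using arg_cong[OF assms(1), of "\<lambda>t. t * b'"] arg_cong[OF assms(2), of "\<lambda>t. t * b"]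
    by (simp add: algebra_simps)
  show "(a * b' - a' * b) * y = a * c' - a' * c"
    using arg_cong[OF assms(1), of "\<lambda>t. t * a'"] arg_cong[OF assms(2), of "\<lambda>t. t * a"]
    by (simp add: algebra_simps)
qed

lemma line_eq_Int_eq_singletonI:
  assumes det: "a * b' - a' * b \<noteq> 0" and "p \<in> line_eq a b c" "p \<in> line_eq a' b' c'"
  shows "line_eq a b c \<inter> line_eq a' b' c' = {p}"
proof (intro equalityI subsetI)
  fix q assume "q \<in> line_eq a b c \<inter> line_eq a' b' c'"
  then have q: "a * fst q + b * snd q = c" "a' * fst q + b' * snd q = c'" by simp_all
  have p: "a * fst p + b * snd p = c" "a' * fst p + b' * snd p = c'" using assms(2,3) by simp_all
  have "(a * b' - a' * b) * fst q = (a * b' - a' * b) * fst p"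
    "(a * b' - a' * b) * snd q = (a * b' - a' * b) * snd p"
    using cramer_rule[OF q] cramer_rule[OF p] by simp_all
  then have "fst q = fst p" "snd q = snd p" using det by simp_all
  then show "q \<in> {p}" by (simp add: prod_eq_iff)
qed (use assms in simp)

lemma line_eq_Int_eq_singletonD:
  assumes ab: "(a, b) \<noteq> (0, 0)" and p: "line_eq a b c \<inter> line_eq a' b' c' = {p}"
  shows "a * b' - a' * b \<noteq> 0"
    and "p = ((c * b' - c' * b) / (a * b' - a' * b), (a * c' - a' * c) / (a * b' - a' * b))"
proof -
  have eqs: "a * fst p + b * snd p = c" "a' * fst p + b' * snd p = c'" using p by auto
  show det: "a * b' - a' * b \<noteq> 0"
  proof
    assume "a * b' - a' * b = 0"
    then have "(fst p - b, snd p + a) \<in> line_eq a b c \<inter> line_eq a' b' c'"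
      using eqs by (simp add: algebra_simps)
    then have "(fst p - b, snd p + a) = p" using p by blast
    then show False using ab by (simp add: prod_eq_iff)
  qed
  then show "p = ((c * b' - c' * b) / (a * b' - a' * b), (a * c' - a' * c) / (a * b' - a' * b))"
    using cramer_rule[OF eqs] by (simp add: prod_eq_iff field_simps)
qed

text \<open>The formula behind \<open>reflect_pt\<close>, for a fixed equation instead of a chosen one.\<close>

definition reflection :: "real \<Rightarrow> real \<Rightarrow> real \<Rightarrow> point \<Rightarrow> point" where
  "reflection a b c p =
     (let k = 2 * (a * fst p + b * snd p - c) / (a\<^sup>2 + b\<^sup>2) in (fst p - k * a, snd p - k * b))"

lemma reflection_scale:
  assumes "l \<noteq> 0"
  shows "reflection (l * a) (l * b) (l * c) = reflection a b c"
proof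
  fix p
  have "2 * (l * a * fst p + l * b * snd p - l * c) / ((l * a)\<^sup>2 + (l * b)\<^sup>2)
        = (2 * (a * fst p + b * snd p - c) / (a\<^sup>2 + b\<^sup>2)) / l"
  proof -
    have "2 * (l * a * fst p + l * b * snd p - l * c) = l * (2 * (a * fst p + b * snd p - c))"
      "(l * a)\<^sup>2 + (l * b)\<^sup>2 = l * (l * (a\<^sup>2 + b\<^sup>2))"
      by (simp_all add: algebra_simps power2_eq_square)
    then show ?thesis using assms by simp
  qed
  then show "reflection (l * a) (l * b) (l * c) p = reflection a b c p"
    unfolding reflection_def Let_def using assms by simp
qed

lemma reflect_pt_line_eq:
  assumes ab: "(a, b) \<noteq> (0, 0)"
  shows "reflect_pt (line_eq a b c) = reflection a b c"
proof -
  let ?P = "\<lambda>(a', b', c'). (a', b') \<noteq> (0, 0) \<and> line_eq a b c = line_eq a' b' c'"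
  obtain a' b' c' where abc': "(SOME t. ?P t) = (a', b', c')" by (cases "SOME t. ?P t") auto
  have "?P (a, b, c)" using ab by simp
  then have "?P (a', b', c')" unfolding abc'[symmetric] by (rule someI)
  then obtain l where "l \<noteq> 0" "a' = l * a" "b' = l * b" "c' = l * c"
    using line_eq_subset_imp_proportional[OF ab, of a' b' c c'] by auto
  then have "reflection a' b' c' = reflection a b c" using reflection_scale by simp
  moreover have "reflect_pt (line_eq a b c) = reflection a' b' c'"
    unfolding reflect_pt_def reflection_def abc' by auto
  ultimately show ?thesis by simp
qed

lemma reflection_reflection:
  assumes "(a, b) \<noteq> (0, 0)"
  shows "reflection a b c (reflection a b c p) = p"
proof -
  define n where "n = a\<^sup>2 + b\<^sup>2"
  have n: "n \<noteq> 0" unfolding n_def using sum_squares_pos[OF assms] by linarith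
  define k where "k = 2 * (a * fst p + b * snd p - c) / n"
  have "2 * (a * (fst p - k * a) + b * (snd p - k * b) - c) = 2 * (a * fst p + b * snd p - c) - 2 * k * n"
    unfolding n_def by (simp add: algebra_simps power2_eq_square)
  also have "\<dots> = - k * n" unfolding k_def using n by simp
  finally show ?thesis
    unfolding reflection_def Let_def n_def[symmetric] k_def[symmetric] using n by simp
qed

lemma reflect_line_line_eq:
  fixes a b c a2 b2 c2 :: real
  assumes ab: "(a, b) \<noteq> (0, 0)"
  defines "t \<equiv> 2 * (a * a2 + b * b2) / (a\<^sup>2 + b\<^sup>2)"
  shows "reflect_line (line_eq a b c) (line_eq a2 b2 c2) = line_eq (a2 - t * a) (b2 - t * b) (c2 - t * c)"
proof -
  define n where "n = a\<^sup>2 + b\<^sup>2"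
  have n: "n \<noteq> 0" unfolding n_def using sum_squares_pos[OF ab] by linarith
  let ?R = "reflection a b c"
  have mem_iff: "?R x \<in> line_eq a2 b2 c2 \<longleftrightarrow> x \<in> line_eq (a2 - t * a) (b2 - t * b) (c2 - t * c)" for x
  proof -
    define k where "k = 2 * (a * fst x + b * snd x - c) / n"
    have "k * (a * a2 + b * b2) = t * (a * fst x + b * snd x - c)"
      unfolding k_def t_def n_def[symmetric] using n by (simp add: field_simps)
    then have "a2 * (fst x - k * a) + b2 * (snd x - k * b)
        = (a2 - t * a) * fst x + (b2 - t * b) * snd x + t * c"
      by (simp add: algebra_simps)
    then show ?thesis unfolding reflection_def Let_def n_def[symmetric] k_def[symmetric] by auto
  qed
  show ?thesis
    unfolding reflect_line_def reflect_pt_line_eq[OF ab]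
  proof (intro equalityI subsetI)
    fix x assume "x \<in> ?R ` line_eq a2 b2 c2"
    then obtain y where "y \<in> line_eq a2 b2 c2" "x = ?R y" by blast
    then have "?R x \<in> line_eq a2 b2 c2" using reflection_reflection[OF ab] by simp
    then show "x \<in> line_eq (a2 - t * a) (b2 - t * b) (c2 - t * c)" using mem_iff by blast
  next
    fix x assume "x \<in> line_eq (a2 - t * a) (b2 - t * b) (c2 - t * c)"
    then have "?R x \<in> line_eq a2 b2 c2" using mem_iff by blast
    then show "x \<in> ?R ` line_eq a2 b2 c2"
      using reflection_reflection[OF ab, of c x] by (metis image_eqI)
  qed
qed

text \<open>Reflecting the normal vector \<open>(a\<^sub>2, b\<^sub>2)\<close> preserves its length.\<close>

lemma reflected_normal_nonzero:
  fixes a b a2 b2 :: real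
  assumes ab: "(a, b) \<noteq> (0, 0)" and ab2: "(a2, b2) \<noteq> (0, 0)"
  defines "t \<equiv> 2 * (a * a2 + b * b2) / (a\<^sup>2 + b\<^sup>2)"
  shows "(a2 - t * a, b2 - t * b) \<noteq> (0, 0)"
proof -
  define n where "n = a\<^sup>2 + b\<^sup>2"
  have n: "n \<noteq> 0" unfolding n_def using sum_squares_pos[OF ab] by linarith
  have tn: "t * n = 2 * (a * a2 + b * b2)" unfolding t_def n_def[symmetric] using n by simp
  have "(a2 - t * a)\<^sup>2 + (b2 - t * b)\<^sup>2 = a2\<^sup>2 + b2\<^sup>2 - 2 * t * (a * a2 + b * b2) + t * (t * n)"
    unfolding n_def by (simp add: power2_eq_square algebra_simps)
  also have "\<dots> = a2\<^sup>2 + b2\<^sup>2" unfolding tn by simp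
  finally have "0 < (a2 - t * a)\<^sup>2 + (b2 - t * b)\<^sup>2" using sum_squares_pos[OF ab2] by simp
  then show ?thesis by (intro notI) simp
qed

text \<open>With normalised equations \<open>e\<^sub>i(x) = (a\<^sub>i x + b\<^sub>i y - c\<^sub>i) / n\<^sub>i\<close>, the points equidistant from
  the two lines are the solutions of \<open>e\<^sub>1 = e\<^sub>2\<close> or \<open>e\<^sub>1 = - e\<^sub>2\<close>.\<close>

lemma equidistant_line_subset_bisector:
  assumes ab1: "(a1, b1) \<noteq> (0, 0)" and ab2: "(a2, b2) \<noteq> (0, 0)"
    and eqd: "equidistant_line L (line_eq a1 b1 c1) (line_eq a2 b2 c2)"
  defines "n1 \<equiv> sqrt (a1\<^sup>2 + b1\<^sup>2)" and "n2 \<equiv> sqrt (a2\<^sup>2 + b2\<^sup>2)"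
  obtains s where "s = 1 \<or> s = - 1"
    and "L \<subseteq> line_eq (a1 / n1 - s * (a2 / n2)) (b1 / n1 - s * (b2 / n2)) (c1 / n1 - s * (c2 / n2))"
proof -
  obtain a b c where L: "L = line_eq a b c"
    using eqd unfolding equidistant_line_def is_line_def by blast
  have n1: "n1 > 0" and n2: "n2 > 0"
    unfolding n1_def n2_def using sum_squares_pos[OF ab1] sum_squares_pos[OF ab2] by simp_all
  define M where "M s = line_eq (a1 / n1 - s * (a2 / n2)) (b1 / n1 - s * (b2 / n2)) (c1 / n1 - s * (c2 / n2))"
    for s
  have "L \<subseteq> M 1 \<union> M (- 1)"
  proof
    fix x assume "x \<in> L"
    define u where "u = (a1 * fst x + b1 * snd x - c1) / n1"
    define v where "v = (a2 * fst x + b2 * snd x - c2) / n2"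
    have "\<bar>u\<bar> = \<bar>v\<bar>"
      using eqd \<open>x \<in> L\<close> n1 n2 unfolding equidistant_line_def u_def v_def n1_def n2_def
      by (simp add: infdist_line_eq[OF ab1] infdist_line_eq[OF ab2] abs_div)
    then have "u - 1 * v = 0 \<or> u - (- 1) * v = 0" by (auto simp: abs_eq_iff)
    moreover have "x \<in> M s \<longleftrightarrow> u - s * v = 0" for s
      unfolding M_def u_def v_def by (simp add: algebra_simps diff_divide_distrib add_divide_distrib)
    ultimately show "x \<in> M 1 \<union> M (- 1)" by blast
  qed
  then have "L \<subseteq> M 1 \<or> L \<subseteq> M (- 1)" unfolding L M_def by (rule line_eq_subset_UnD)
  then show ?thesis using that unfolding M_def by blast
qed

text \<open>The degenerate case \<open>e\<^sub>1 - s e\<^sub>2 = 0\<close> identically would make the two lines equal.\<close>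

lemma equidistant_line_eq:
  assumes ab1: "(a1, b1) \<noteq> (0, 0)" and ab2: "(a2, b2) \<noteq> (0, 0)"
    and ne: "line_eq a1 b1 c1 \<noteq> line_eq a2 b2 c2"
    and eqd: "equidistant_line L (line_eq a1 b1 c1) (line_eq a2 b2 c2)"
  defines "n1 \<equiv> sqrt (a1\<^sup>2 + b1\<^sup>2)" and "n2 \<equiv> sqrt (a2\<^sup>2 + b2\<^sup>2)"
  obtains s where "s = 1 \<or> s = - 1"
    and "L = line_eq (a1 / n1 - s * (a2 / n2)) (b1 / n1 - s * (b2 / n2)) (c1 / n1 - s * (c2 / n2))"
    and "(a1 / n1 - s * (a2 / n2), b1 / n1 - s * (b2 / n2)) \<noteq> (0, 0)"
proof -
  obtain a b c where L: "L = line_eq a b c" "(a, b) \<noteq> (0, 0)"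
    using eqd unfolding equidistant_line_def is_line_def by blast
  have n1: "n1 > 0" and n2: "n2 > 0"
    unfolding n1_def n2_def using sum_squares_pos[OF ab1] sum_squares_pos[OF ab2] by simp_all
  obtain s where s: "s = 1 \<or> s = - 1"
    and sub: "L \<subseteq> line_eq (a1 / n1 - s * (a2 / n2)) (b1 / n1 - s * (b2 / n2)) (c1 / n1 - s * (c2 / n2))"
    by (rule equidistant_line_subset_bisector[OF ab1 ab2 eqd, folded n1_def n2_def])
  have nonzero: "(a1 / n1 - s * (a2 / n2), b1 / n1 - s * (b2 / n2)) \<noteq> (0, 0)"
  proof
    assume 0: "(a1 / n1 - s * (a2 / n2), b1 / n1 - s * (b2 / n2)) = (0, 0)"
    have "(c * a / (a\<^sup>2 + b\<^sup>2), c * b / (a\<^sup>2 + b\<^sup>2)) \<in> L"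
      using line_eq_point_mem[OF L(2)] unfolding L(1) .
    with 0 sub have "c1 / n1 = s * (c2 / n2)" by auto
    with 0 have e: "a1 / n1 = s / n2 * a2" "b1 / n1 = s / n2 * b2" "c1 / n1 = s / n2 * c2" by simp_all
    have "line_eq a1 b1 c1 = line_eq (a1 / n1) (b1 / n1) (c1 / n1)"
      using line_eq_scale[of "1 / n1" a1 b1 c1] n1 by simp
    also have "\<dots> = line_eq a2 b2 c2"
      unfolding e using line_eq_scale[of "s / n2" a2 b2 c2] s n2 by auto
    finally show False using ne by simp
  qed
  have "L = line_eq (a1 / n1 - s * (a2 / n2)) (b1 / n1 - s * (b2 / n2)) (c1 / n1 - s * (c2 / n2))"
    using line_eq_subset_imp_eq[OF L(2) nonzero sub[unfolded L(1)]] unfolding L(1) ..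
  then show ?thesis using that s nonzero by blast
qed

section \<open>Origami closure of \<open>K \<times> K\<close>\<close>

definition lines_over :: "real set \<Rightarrow> point set set" where
  "lines_over K = {line_eq a b c | a b c. a \<in> K \<and> b \<in> K \<and> c \<in> K \<and> (a, b) \<noteq> (0, 0)}"

context pythagorean_subfield
begin

lemma line_eq_mem_lines_over:
  "a \<in> K \<Longrightarrow> b \<in> K \<Longrightarrow> c \<in> K \<Longrightarrow> (a, b) \<noteq> (0, 0) \<Longrightarrow> line_eq a b c \<in> lines_over K"
  unfolding lines_over_def by blast

lemma lines_overE:
  assumes "L \<in> lines_over K"
  obtains a b c where "L = line_eq a b c" "a \<in> K" "b \<in> K" "c \<in> K" "(a, b) \<noteq> (0, 0)"
  using assms unfolding lines_over_def by blast

lemma Int_lines_over_singleton_mem: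
  assumes "L1 \<in> lines_over K" "L2 \<in> lines_over K" "L1 \<inter> L2 = {p}"
  shows "p \<in> K \<times> K"
proof -
  obtain a b c where 1: "L1 = line_eq a b c" "a \<in> K" "b \<in> K" "c \<in> K" "(a, b) \<noteq> (0, 0)"
    using assms(1) by (rule lines_overE)
  obtain a' b' c' where 2: "L2 = line_eq a' b' c'" "a' \<in> K" "b' \<in> K" "c' \<in> K"
    using assms(2) by (rule lines_overE)
  have "p = ((c * b' - c' * b) / (a * b' - a' * b), (a * c' - a' * c) / (a * b' - a' * b))"
    using line_eq_Int_eq_singletonD(2)[OF 1(5)] assms(3) unfolding 1(1) 2(1) by blast
  moreover have "(c * b' - c' * b) / (a * b' - a' * b) \<in> K" "(a * c' - a' * c) / (a * b' - a' * b) \<in> K"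
    using 1 2 by (simp_all add: closure_rules)
  ultimately show ?thesis by (simp add: mem_Times_iff)
qed

lemma equidistant_line_mem_lines_over:
  assumes "L1 \<in> lines_over K" "L2 \<in> lines_over K" "L1 \<noteq> L2" "equidistant_line L L1 L2"
  shows "L \<in> lines_over K"
proof -
  obtain a1 b1 c1 where 1: "L1 = line_eq a1 b1 c1" "a1 \<in> K" "b1 \<in> K" "c1 \<in> K" "(a1, b1) \<noteq> (0, 0)"
    using assms(1) by (rule lines_overE)
  obtain a2 b2 c2 where 2: "L2 = line_eq a2 b2 c2" "a2 \<in> K" "b2 \<in> K" "c2 \<in> K" "(a2, b2) \<noteq> (0, 0)"
    using assms(2) by (rule lines_overE)
  have ne: "line_eq a1 b1 c1 \<noteq> line_eq a2 b2 c2"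
    and eqd: "equidistant_line L (line_eq a1 b1 c1) (line_eq a2 b2 c2)"
    using assms(3,4) unfolding 1(1) 2(1) by simp_all
  obtain s where "s = 1 \<or> s = - 1" and L:
    "L = line_eq (a1 / sqrt (a1\<^sup>2 + b1\<^sup>2) - s * (a2 / sqrt (a2\<^sup>2 + b2\<^sup>2)))
                 (b1 / sqrt (a1\<^sup>2 + b1\<^sup>2) - s * (b2 / sqrt (a2\<^sup>2 + b2\<^sup>2)))
                 (c1 / sqrt (a1\<^sup>2 + b1\<^sup>2) - s * (c2 / sqrt (a2\<^sup>2 + b2\<^sup>2)))"
    "(a1 / sqrt (a1\<^sup>2 + b1\<^sup>2) - s * (a2 / sqrt (a2\<^sup>2 + b2\<^sup>2)),
      b1 / sqrt (a1\<^sup>2 + b1\<^sup>2) - s * (b2 / sqrt (a2\<^sup>2 + b2\<^sup>2))) \<noteq> (0, 0)"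
    by (rule equidistant_line_eq[OF 1(5) 2(5) ne eqd])
  then have "s \<in> K" using one_mem uminus_mem by auto
  then show ?thesis unfolding L(1) using 1 2 L(2)
    by (intro line_eq_mem_lines_over) (simp_all add: closure_rules)
qed

lemma origami_pair_Times_lines_over: "origami_pair (K \<times> K) (lines_over K)"
  unfolding origami_pair_def
proof (intro conjI ballI allI impI)
  fix L assume "L \<in> lines_over K"
  then show "is_line L" by (auto elim: lines_overE intro: is_line_line_eq)
next
  fix p q assume pq: "p \<in> K \<times> K" "q \<in> K \<times> K" "p \<noteq> q"
  then have "(snd q - snd p, fst p - fst q) \<noteq> (0, 0)"
    "(2 * (fst q - fst p), 2 * (snd q - snd p)) \<noteq> (0, 0)" by (auto simp: prod_eq_iff)
  then show "line_through p q \<in> lines_over K" "perp_bisector p q \<in> lines_over K"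
    unfolding line_through_eq_line_eq[OF pq(3)] perp_bisector_eq_line_eq using pq
    by (simp_all add: mem_Times_iff closure_rules line_eq_mem_lines_over)
next
  fix L1 L2 assume L12: "L1 \<in> lines_over K" "L2 \<in> lines_over K"
  then show "L1 \<inter> L2 = {p} \<Longrightarrow> p \<in> K \<times> K" for p by (rule Int_lines_over_singleton_mem)
  show "L1 \<noteq> L2 \<Longrightarrow> equidistant_line L L1 L2 \<Longrightarrow> L \<in> lines_over K" for L
    using L12 by (rule equidistant_line_mem_lines_over)
  obtain a b c where 1: "L1 = line_eq a b c" "a \<in> K" "b \<in> K" "c \<in> K" "(a, b) \<noteq> (0, 0)"
    using L12(1) by (rule lines_overE)
  obtain a2 b2 c2 where 2: "L2 = line_eq a2 b2 c2" "a2 \<in> K" "b2 \<in> K" "c2 \<in> K" "(a2, b2) \<noteq> (0, 0)"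
    using L12(2) by (rule lines_overE)
  show "reflect_line L1 L2 \<in> lines_over K"
    unfolding 1(1) 2(1) reflect_line_line_eq[OF 1(5)]
    using 1 2 reflected_normal_nonzero[OF 1(5) 2(5)]
    by (intro line_eq_mem_lines_over) (simp_all add: closure_rules)
qed

lemma P0_subset: "P0 \<subseteq> K \<times> K"
proof -
  have "K \<times> K \<in> {P. (0, 0) \<in> P \<and> (0, 1) \<in> P \<and> origami_closed P}"
    using zero_mem one_mem origami_pair_Times_lines_over unfolding origami_closed_def by blast
  then show ?thesis unfolding P0_def by (rule Inter_lower)
qed

lemma F0_subset: "F0 \<subseteq> K"
proof
  fix \<alpha> assume "\<alpha> \<in> F0"
  then obtain v1 v2 where "v1 \<in> P0" "v2 \<in> P0" "\<bar>\<alpha>\<bar> = dist v1 v2"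
    unfolding F0_def by blast
  then have "v1 \<in> K \<times> K" "v2 \<in> K \<times> K" using P0_subset by blast+
  with \<open>\<bar>\<alpha>\<bar> = dist v1 v2\<close> have "\<bar>\<alpha>\<bar> \<in> K"
    unfolding dist_point by (simp add: mem_Times_iff closure_rules)
  then show "\<alpha> \<in> K" using uminus_mem[of "\<bar>\<alpha>\<bar>"] by (cases "\<alpha> \<ge> 0") simp_all
qed

end

section \<open>The construction\<close>

lemma origami_pairD:
  assumes "origami_pair P Ls"
  shows origami_pair_Int_mem: "L1 \<in> Ls \<Longrightarrow> L2 \<in> Ls \<Longrightarrow> L1 \<inter> L2 = {p} \<Longrightarrow> p \<in> P"
    and origami_pair_line_through: "p \<in> P \<Longrightarrow> q \<in> P \<Longrightarrow> p \<noteq> q \<Longrightarrow> line_through p q \<in> Ls"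
    and origami_pair_perp_bisector: "p \<in> P \<Longrightarrow> q \<in> P \<Longrightarrow> p \<noteq> q \<Longrightarrow> perp_bisector p q \<in> Ls"
    and origami_pair_equidistant:
      "L1 \<in> Ls \<Longrightarrow> L2 \<in> Ls \<Longrightarrow> L1 \<noteq> L2 \<Longrightarrow> equidistant_line L L1 L2 \<Longrightarrow> L \<in> Ls"
proof -
  note clauses = assms[unfolded origami_pair_def]
  show "L1 \<in> Ls \<Longrightarrow> L2 \<in> Ls \<Longrightarrow> L1 \<inter> L2 = {p} \<Longrightarrow> p \<in> P"
    using clauses[THEN conjunct2, THEN conjunct1] by blast
  show "p \<in> P \<Longrightarrow> q \<in> P \<Longrightarrow> p \<noteq> q \<Longrightarrow> line_through p q \<in> Ls"
    using clauses[THEN conjunct2, THEN conjunct2, THEN conjunct1] by blast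
  show "p \<in> P \<Longrightarrow> q \<in> P \<Longrightarrow> p \<noteq> q \<Longrightarrow> perp_bisector p q \<in> Ls"
    using clauses[THEN conjunct2, THEN conjunct2, THEN conjunct2, THEN conjunct1] by blast
  show "L1 \<in> Ls \<Longrightarrow> L2 \<in> Ls \<Longrightarrow> L1 \<noteq> L2 \<Longrightarrow> equidistant_line L L1 L2 \<Longrightarrow> L \<in> Ls"
    using clauses[THEN conjunct2, THEN conjunct2, THEN conjunct2, THEN conjunct2, THEN conjunct1] by blast
qed

lemma equidistant_line_eqI:
  assumes "(a, b) \<noteq> (0, 0)" "(a1, b1) \<noteq> (0, 0)" "(a2, b2) \<noteq> (0, 0)"
    and "\<And>x y. a * x + b * y = c \<Longrightarrow>
      \<bar>a1 * x + b1 * y - c1\<bar> / sqrt (a1\<^sup>2 + b1\<^sup>2) = \<bar>a2 * x + b2 * y - c2\<bar> / sqrt (a2\<^sup>2 + b2\<^sup>2)"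
  shows "equidistant_line (line_eq a b c) (line_eq a1 b1 c1) (line_eq a2 b2 c2)"
proof (unfold equidistant_line_def, intro conjI ballI)
  show "is_line (line_eq a b c)" using assms(1) by (rule is_line_line_eq)
  fix p assume "p \<in> line_eq a b c"
  then show "infdist p (line_eq a1 b1 c1) = infdist p (line_eq a2 b2 c2)"
    using assms(4)[of "fst p" "snd p"] by (simp add: infdist_line_eq[OF assms(2)] infdist_line_eq[OF assms(3)])
qed

text \<open>Folding the unit segment on the \<open>y\<close>-axis yields the lines \<open>x = 0\<close>, \<open>y = x\<close> and \<open>y = x + 1\<close>,
  via the auxiliary points \<open>(0, 1/2)\<close>, \<open>(1/4, 1/4)\<close> and \<open>(-1/4, 3/4)\<close>.\<close>

lemma origami_pair_axis_diagonals:
  assumes op: "origami_pair P Ls" and O: "(0, 0) \<in> P" and I: "(0, 1) \<in> P"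
  shows "line_eq 1 0 0 \<in> Ls" "line_eq 1 (- 1) 0 \<in> Ls" "line_eq (- 1) 1 1 \<in> Ls"
proof -
  note Int_mem = origami_pair_Int_mem[OF op] and through = origami_pair_line_through[OF op]
    and bisector = origami_pair_perp_bisector[OF op]
  show V: "line_eq 1 0 0 \<in> Ls"
    using through[OF O I] by (simp add: line_through_eq_line_eq)
  have H: "line_eq 0 2 1 \<in> Ls"
    using bisector[OF O I] by (simp add: perp_bisector_eq_line_eq)
  have C: "(0, 1 / 2) \<in> P"
    using Int_mem[OF V H line_eq_Int_eq_singletonI] by simp
  have "line_eq 1 1 (1 / 2) \<in> Ls"
  proof (rule origami_pair_equidistant[OF op V H])
    have "(0, 0) \<in> line_eq 1 0 (0 :: real)" "(0, 0) \<notin> line_eq 0 2 (1 :: real)" by simp_all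
    then show "line_eq 1 0 0 \<noteq> line_eq 0 2 1" by blast
    show "equidistant_line (line_eq 1 1 (1 / 2)) (line_eq 1 0 0) (line_eq 0 2 1)"
    proof (rule equidistant_line_eqI)
      fix x y :: real assume "1 * x + 1 * y = 1 / 2"
      then have "0 * x + 2 * y - 1 = - 2 * x" by simp
      moreover have "sqrt (0\<^sup>2 + 2\<^sup>2) = (2 :: real)" by (rule real_sqrt_unique) simp_all
      ultimately show "\<bar>1 * x + 0 * y - 0\<bar> / sqrt (1\<^sup>2 + 0\<^sup>2) = \<bar>0 * x + 2 * y - 1\<bar> / sqrt (0\<^sup>2 + 2\<^sup>2)"
        by (simp add: abs_mult)
    qed simp_all
  qed
  moreover have "line_eq 0 1 (1 / 4) \<in> Ls" "line_eq 0 1 (3 / 4) \<in> Ls"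
    using bisector[OF O C] bisector[OF C I] by (simp_all add: perp_bisector_eq_line_eq power2_eq_square)
  ultimately have Q1: "(1 / 4, 1 / 4) \<in> P" and Q2: "(- 1 / 4, 3 / 4) \<in> P"
    using Int_mem line_eq_Int_eq_singletonI by simp_all
  show "line_eq 1 (- 1) 0 \<in> Ls"
    using through[OF O Q1] line_eq_scale[of "1 / 4" 1 "- 1" 0]
    by (simp add: line_through_eq_line_eq)
  show "line_eq (- 1) 1 1 \<in> Ls"
    using through[OF I Q2] line_eq_scale[of "1 / 4" "- 1" 1 1]
    by (simp add: line_through_eq_line_eq)
qed

text \<open>The bisector \<open>y = (1 + sqrt 2) x\<close> of the angle between \<open>x = 0\<close> and \<open>y = x\<close> meets
  \<open>y = x + 1\<close> at a point at distance \<open>sqrt (2 + sqrt 2)\<close> from the origin.\<close>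

lemma origami_pair_constructs_point:
  assumes op: "origami_pair P Ls" and O: "(0, 0) \<in> P" and I: "(0, 1) \<in> P"
  shows "(sqrt 2 / 2, 1 + sqrt 2 / 2) \<in> P"
proof -
  note lines = origami_pair_axis_diagonals[OF assms]
  have bisector: "line_eq (1 + sqrt 2) (- 1) 0 \<in> Ls"
  proof (rule origami_pair_equidistant[OF op lines(1,2)])
    have "(0, 1) \<in> line_eq 1 0 (0 :: real)" "(0, 1) \<notin> line_eq 1 (- 1) (0 :: real)" by simp_all
    then show "line_eq 1 0 0 \<noteq> line_eq 1 (- 1) 0" by blast
    show "equidistant_line (line_eq (1 + sqrt 2) (- 1) 0) (line_eq 1 0 0) (line_eq 1 (- 1) 0)"
    proof (rule equidistant_line_eqI)
      fix x y :: real assume "(1 + sqrt 2) * x + - 1 * y = 0"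
      then have "x - y = - (sqrt 2 * x)" by (simp add: algebra_simps)
      then show "\<bar>1 * x + 0 * y - 0\<bar> / sqrt (1\<^sup>2 + 0\<^sup>2) = \<bar>1 * x + - 1 * y - 0\<bar> / sqrt (1\<^sup>2 + (- 1)\<^sup>2)"
        by (simp add: abs_mult)
    qed simp_all
  qed
  have "line_eq (1 + sqrt 2) (- 1) 0 \<inter> line_eq (- 1) 1 1 = {(sqrt 2 / 2, 1 + sqrt 2 / 2)}"
    by (rule line_eq_Int_eq_singletonI) (simp_all add: algebra_simps)
  then show ?thesis using origami_pair_Int_mem[OF op bisector lines(3)] by blast
qed

lemma origami_point_mem_P0: "(sqrt 2 / 2, 1 + sqrt 2 / 2) \<in> P0"
  unfolding P0_def origami_closed_def using origami_pair_constructs_point by blast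

lemma one_mem_F0: "(1 :: real) \<in> F0"
proof -
  have "(0, 0) \<in> P0" "(0, 1) \<in> P0" unfolding P0_def by blast+
  moreover have "\<bar>1\<bar> = dist (0 :: real, 0 :: real) (0, 1)" by (simp add: dist_point)
  ultimately show ?thesis unfolding F0_def by blast
qed

lemma sqrt_2_plus_sqrt_2_mem_F0: "sqrt (2 + sqrt 2) \<in> F0"
proof -
  have "(0, 0) \<in> P0" unfolding P0_def by blast
  moreover have "\<bar>sqrt (2 + sqrt 2)\<bar> = dist (0, 0) (sqrt 2 / 2, 1 + sqrt 2 / 2)"
    by (simp add: dist_point power2_eq_square algebra_simps add_nonneg_nonneg)
  ultimately show ?thesis unfolding F0_def using origami_point_mem_P0 by blast
qed

theorem mainTheorem9:
  shows "sqrt (2 + sqrt 2) \<in> F0 \<and> (1::real) \<in> F0 \<and>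
         sqrt ((sqrt (2 + sqrt 2))\<^sup>2 - 1\<^sup>2) = sqrt (1 + sqrt 2) \<and>
         sqrt (1 + sqrt 2) \<notin> F0 \<and>
         \<not> (\<forall>h a. h \<in> F0 \<longrightarrow> a \<in> F0 \<longrightarrow> h > a \<longrightarrow> a > 0 \<longrightarrow> sqrt (h\<^sup>2 - a\<^sup>2) \<in> F0)"
proof -
  have legs: "sqrt ((sqrt (2 + sqrt 2))\<^sup>2 - 1\<^sup>2) = sqrt (1 + sqrt 2)"
    by (simp add: add_nonneg_nonneg)
  obtain K where "pythagorean_subfield K" "sqrt (1 + sqrt 2) \<notin> K"
    using exists_pythagorean_subfield_not_mem by blast
  then have not_mem: "sqrt (1 + sqrt 2) \<notin> F0" using pythagorean_subfield.F0_subset by blast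
  have "1 < sqrt (2 + sqrt 2)" by (simp add: add_pos_nonneg)
  have "\<not> (\<forall>h a. h \<in> F0 \<longrightarrow> a \<in> F0 \<longrightarrow> h > a \<longrightarrow> a > 0 \<longrightarrow> sqrt (h\<^sup>2 - a\<^sup>2) \<in> F0)"
  proof
    assume "\<forall>h a. h \<in> F0 \<longrightarrow> a \<in> F0 \<longrightarrow> h > a \<longrightarrow> a > 0 \<longrightarrow> sqrt (h\<^sup>2 - a\<^sup>2) \<in> F0"
    from this[rule_format, OF sqrt_2_plus_sqrt_2_mem_F0 one_mem_F0 \<open>1 < sqrt (2 + sqrt 2)\<close>]
    show False using legs not_mem by simp
  qed
  then show ?thesis using sqrt_2_plus_sqrt_2_mem_F0 one_mem_F0 legs not_mem by blast
qed

end
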